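(* Assume the setting in the context, with $0<\lambda<\eta<1$. Then $\lim_{k\to\infty}\|z_k\|=0$.
   Context: Let $g:\mathbb{R}^n\to\mathbb{R}$, $h:\mathbb{R}^n\times\mathbb{R}^d\to\mathbb{R}$ satisfy: (A1) $h$ is twice differentiable in $x$, for each $\theta$ there are $0<\mu(\theta)\le L(\theta)$ with $\mu(\theta)I\preceq\nabla_x^2h(x,\theta)\preceq L(\theta)I$ for all $x$, and $\nabla_xh,\nabla^2_xh$ are continuous in $\theta$; (A2) $\nabla_x^2h$ is $L_H$-Lipschitz in $x$ and $\nabla^2_{x\theta}h$ is $L_J$-Lipschitz in $x$, uniformly in $\theta$. Let $\hat{x}(\theta)=\arg\min_xh(x,\theta)$, $f(\theta)=g(\hat{x}(\theta))$. (B) $f$ is continuously differentiable with $L_{\nabla f}$-Lipschitz gradient, $g$ continuously differentiable with $L_{\nabla g}$-Lipschitz gradient, $L_{\nabla f},L_{\nabla g}>0$, $g$ bounded below. Fix $\beta_0>0$, $0<\underline{\rho}<1<\overline{\rho}$, $\lambda<\eta$. Consider sequences $\theta_k\in\mathbb{R}^d$, $z_k\in\mathbb{R}^d\setminus\{0\}$, $\epsilon_k\ge0$, $\tilde{x}_k\in\mathbb{R}^n$ with $\|\tilde{x}_k-\hat{x}(\theta_k)\|\le\epsilon_k$, $\alpha_k,\beta_k>0$, with $\theta_{k+1}=\theta_k-\alpha_kz_k$ and $\|z_k-\nabla f(\theta_k)\|\le(1-\eta)\|z_k\|$ for all $k$. Set $w_k=\|\nabla g(\tilde{x}_k)\|+\|\nabla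 g(\tilde{x}_{k+1})\|$, $\bar{\epsilon}_k=\max\{\epsilon_k,\epsilon_{k+1}\}$, $\hat{s}_k=\sqrt{(\eta-\lambda)^2-4L_{\nabla f}(w_k\bar{\epsilon}_k+L_{\nabla g}\bar{\epsilon}_k^2)/\|z_k\|^2}$ (assumed real), $\underline{\alpha}_k=(\eta-\lambda-\hat{s}_k)/L_{\nabla f}$, $\overline{\alpha}_k=(\eta-\lambda+\hat{s}_k)/L_{\nabla f}$. Assume for every $k$: $\alpha_k=\underline{\rho}^{i_k}\beta_k$ where $i_k$ is the smallest nonnegative integer with $\underline{\rho}^{i_k}\beta_k\in[\underline{\alpha}_k,\overline{\alpha}_k]$; if $i_k>0$ then $\alpha_k>\underline{\rho}\,\overline{\alpha}_k$; and $\beta_{k+1}=\overline{\rho}\alpha_k$. *)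

theory Defs
  imports "HOL-Analysis.Analysis"
begin

text \<open>The lower-level solution map: a minimiser of h(., theta).
  Under (A1) the minimiser exists and is unique (strong convexity).\<close>
definition xhat :: "(real^'n \<Rightarrow> real^'d \<Rightarrow> real) \<Rightarrow> real^'d \<Rightarrow> real^'n" where
  "xhat h \<theta> = arg_min (\<lambda>x. h x \<theta>) (\<lambda>_. True)"

end

theory Submission
  imports Defs
begin

text \<open>The backtracking rule keeps the step sizes away from zero: either the trial step
  \<open>\<beta>\<^sub>k \<ge> \<alpha>\<^sub>k\<^sub>-\<^sub>1\<close> is accepted, or the accepted step exceeds \<open>\<rho>\<^sub>l\<close> times the upper end
  \<open>(\<eta> - \<lambda> + s\<^sub>k) / L\<close> of the admissible interval, which is at least \<open>(\<eta> - \<lambda>) / L\<close>.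
  Every admissible step is at most \<open>2 (\<eta> - \<lambda>) / L\<close>, so the descent lemma together with
  \<open>\<nabla>f(\<theta>\<^sub>k) \<bullet> z\<^sub>k \<ge> \<eta> \<parallel>z\<^sub>k\<parallel>\<^sup>2\<close> gives \<open>f(\<theta>\<^sub>k\<^sub>+\<^sub>1) \<le> f(\<theta>\<^sub>k) - \<lambda> \<alpha>\<^sub>k \<parallel>z\<^sub>k\<parallel>\<^sup>2\<close>. As \<open>f\<close> is
  bounded below, \<open>\<Sum> \<parallel>z\<^sub>k\<parallel>\<^sup>2 < \<infinity>\<close>. The inexactness of \<open>x\<^sub>k\<close> enters only through
  \<open>0 \<le> s\<^sub>k \<le> \<eta> - \<lambda>\<close>.\<close>

lemma descent_lemma:
  fixes f :: "'a::real_inner \<Rightarrow> real" and Df :: "'a \<Rightarrow> 'a"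
  assumes deriv: "\<And>t. (f has_derivative (\<lambda>v. Df t \<bullet> v)) (at t)"
    and lip: "\<And>s t. norm (Df s - Df t) \<le> L * norm (s - t)"
  shows "f (x - v) \<le> f x - Df x \<bullet> v + L / 2 * (norm v)\<^sup>2"
proof -
  define \<psi> where "\<psi> t = f (x - t *\<^sub>R v) + t * (Df x \<bullet> v) - L / 2 * t\<^sup>2 * (norm v)\<^sup>2" for t :: real
  have \<psi>_deriv: "DERIV \<psi> t :> (- (Df (x - t *\<^sub>R v) \<bullet> v) + Df x \<bullet> v - L * t * (norm v)\<^sup>2)" for t
  proof -
    have "((\<lambda>t. f (x - t *\<^sub>R v)) has_derivative (\<lambda>h. Df (x - t *\<^sub>R v) \<bullet> (- (h *\<^sub>R v)))) (at t)"
      by (rule has_derivative_compose[of "\<lambda>t. x - t *\<^sub>R v" _ _ _ f, OF _ deriv])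
         (auto intro!: derivative_eq_intros)
    then show ?thesis
      unfolding has_field_derivative_def \<psi>_def
      by (auto intro!: derivative_eq_intros simp: algebra_simps)
  qed
  have "\<psi> 1 \<le> \<psi> 0"
  proof (rule DERIV_nonpos_imp_nonincreasing[of 0 1])
    fix t :: real assume t: "0 \<le> t" "t \<le> 1"
    have "Df x \<bullet> v - Df (x - t *\<^sub>R v) \<bullet> v = (Df x - Df (x - t *\<^sub>R v)) \<bullet> v"
      by (simp add: inner_diff_left)
    also have "\<dots> \<le> norm (Df x - Df (x - t *\<^sub>R v)) * norm v" by (rule norm_cauchy_schwarz)
    also have "\<dots> \<le> L * norm (t *\<^sub>R v) * norm v"
      using lip[of x "x - t *\<^sub>R v"] by (simp add: mult_right_mono)
    also have "\<dots> = L * t * (norm v)\<^sup>2" using t by (simp add: power2_eq_square)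
    finally show "\<exists>y. DERIV \<psi> t :> y \<and> y \<le> 0" using \<psi>_deriv[of t] by auto
  qed simp
  then show ?thesis unfolding \<psi>_def by simp
qed

lemma inner_ge_of_relative_error:
  fixes z d :: "'a::real_inner"
  assumes "norm (z - d) \<le> (1 - \<eta>) * norm z"
  shows "\<eta> * (norm z)\<^sup>2 \<le> d \<bullet> z"
proof -
  have "(norm z)\<^sup>2 - d \<bullet> z = (z - d) \<bullet> z"
    by (simp add: inner_diff_left power2_norm_eq_inner)
  also have "\<dots> \<le> norm (z - d) * norm z" by (rule norm_cauchy_schwarz)
  also have "\<dots> \<le> (1 - \<eta>) * (norm z)\<^sup>2"
    using mult_right_mono[OF assms norm_ge_zero[of z]] by (simp add: power2_eq_square)
  finally show ?thesis by (simp add: algebra_simps)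
qed

lemma sufficient_decrease:
  fixes f :: "'a::real_inner \<Rightarrow> real" and Df :: "'a \<Rightarrow> 'a"
  assumes deriv: "\<And>t. (f has_derivative (\<lambda>v. Df t \<bullet> v)) (at t)"
    and lip: "\<And>s t. norm (Df s - Df t) \<le> L * norm (s - t)"
    and L: "0 < L" and \<alpha>: "0 < \<alpha>" "\<alpha> \<le> 2 * (\<eta> - lam) / L"
    and angle: "\<eta> * (norm z)\<^sup>2 \<le> Df x \<bullet> z"
  shows "f (x - \<alpha> *\<^sub>R z) \<le> f x - lam * \<alpha> * (norm z)\<^sup>2"
proof -
  have "L / 2 * \<alpha> \<le> \<eta> - lam" using \<alpha> L by (simp add: field_simps)
  then have curvature: "\<alpha> * (L / 2 * \<alpha>) * (norm z)\<^sup>2 \<le> \<alpha> * (\<eta> - lam) * (norm z)\<^sup>2"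
    using \<alpha> by (intro mult_right_mono mult_left_mono) auto
  have "f (x - \<alpha> *\<^sub>R z) \<le> f x - Df x \<bullet> (\<alpha> *\<^sub>R z) + L / 2 * (norm (\<alpha> *\<^sub>R z))\<^sup>2"
    by (rule descent_lemma[OF deriv lip])
  also have "\<dots> = f x - \<alpha> * (Df x \<bullet> z) + \<alpha> * (L / 2 * \<alpha>) * (norm z)\<^sup>2"
    using \<alpha> by (simp add: power2_eq_square algebra_simps)
  also have "\<dots> \<le> f x - \<alpha> * (\<eta> * (norm z)\<^sup>2) + \<alpha> * (\<eta> - lam) * (norm z)\<^sup>2"
    using curvature mult_left_mono[OF angle less_imp_le[OF \<alpha>(1)]] by linarith
  also have "\<dots> = f x - lam * \<alpha> * (norm z)\<^sup>2" by (simp add: algebra_simps)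
  finally show ?thesis .
qed

lemma backtracking_step_bounds:
  fixes \<alpha> \<beta> \<rho> \<delta> c L :: real
  assumes L: "0 < L" and \<rho>: "0 \<le> \<rho>" and \<delta>: "0 \<le> \<delta>" and c: "0 \<le> c" "0 \<le> \<delta>\<^sup>2 - c"
    and backtrack: "\<exists>i::nat. \<alpha> = \<rho> ^ i * \<beta>
      \<and> \<rho> ^ i * \<beta> \<in> {(\<delta> - sqrt (\<delta>\<^sup>2 - c)) / L..(\<delta> + sqrt (\<delta>\<^sup>2 - c)) / L}
      \<and> (\<forall>j<i. \<rho> ^ j * \<beta> \<notin> {(\<delta> - sqrt (\<delta>\<^sup>2 - c)) / L..(\<delta> + sqrt (\<delta>\<^sup>2 - c)) / L})
      \<and> (i > 0 \<longrightarrow> \<alpha> > \<rho> * ((\<delta> + sqrt (\<delta>\<^sup>2 - c)) / L))"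
  shows "\<alpha> \<le> 2 * \<delta> / L" and "\<alpha> = \<beta> \<or> \<rho> * (\<delta> / L) < \<alpha>"
  \<comment> \<open>The minimality of \<open>i\<close> is part of the rule but not needed here.\<close>
proof -
  define s where "s = sqrt (\<delta>\<^sup>2 - c)"
  have s: "0 \<le> s" "s \<le> \<delta>"
    using c \<delta> real_sqrt_le_mono[of "\<delta>\<^sup>2 - c" "\<delta>\<^sup>2"] unfolding s_def by auto
  obtain i :: nat where i: "\<alpha> = \<rho> ^ i * \<beta>" "\<alpha> \<le> (\<delta> + s) / L"
    and last_rejected: "0 < i \<longrightarrow> \<rho> * ((\<delta> + s) / L) < \<alpha>"
    using backtrack unfolding s_def by auto
  show "\<alpha> \<le> 2 * \<delta> / L"
    using i(2) s L by (smt (verit) divide_right_mono)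
  have "\<rho> * (\<delta> / L) \<le> \<rho> * ((\<delta> + s) / L)"
    using s L \<rho> by (intro mult_left_mono divide_right_mono) auto
  then show "\<alpha> = \<beta> \<or> \<rho> * (\<delta> / L) < \<alpha>"
    using i(1) last_rejected by (cases "i = 0") auto
qed

lemma step_sizes_bounded_below:
  fixes \<alpha> \<beta> :: "nat \<Rightarrow> real"
  assumes "\<And>k. 0 < \<alpha> k" and "1 \<le> \<rho>" and "\<And>k. \<beta> (Suc k) = \<rho> * \<alpha> k"
    and "\<And>k. \<alpha> k = \<beta> k \<or> a < \<alpha> k"
  shows "min (\<beta> 0) a \<le> \<alpha> k"
proof (induction k)
  case 0
  then show ?case using assms(4)[of 0] by auto
next
  case (Suc k)
  have "\<alpha> k \<le> \<beta> (Suc k)"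
    using assms(1)[of k] assms(2,3) by (simp add: mult_le_cancel_right1)
  then show ?case using Suc assms(4)[of "Suc k"] by auto
qed

lemma summable_of_decrease_bounded_below:
  fixes F a :: "nat \<Rightarrow> real"
  assumes decrease: "\<And>n. F (Suc n) \<le> F n - a n" and "\<And>n. 0 \<le> a n" and "\<And>n. B \<le> F n"
  shows "summable a"
proof (rule summableI_nonneg_bounded)
  fix n
  have "F n \<le> F 0 - (\<Sum>k<n. a k)"
  proof (induction n)
    case (Suc n)
    then show ?case using decrease[of n] by simp
  qed simp
  then show "(\<Sum>k<n. a k) \<le> F 0 - B" using assms(3)[of n] by linarith
qed (use assms(2) in auto)

theorem theorem3p15:
  fixes g :: "real^'n \<Rightarrow> real" and h :: "real^'n \<Rightarrow> real^'d \<Rightarrow> real"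
    and Dg :: "real^'n \<Rightarrow> real^'n" and Df :: "real^'d \<Rightarrow> real^'d"
    and Dxh :: "real^'n \<Rightarrow> real^'d \<Rightarrow> real^'n"
    and Hxx :: "real^'n \<Rightarrow> real^'d \<Rightarrow> real^'n^'n"
    and Jxt :: "real^'n \<Rightarrow> real^'d \<Rightarrow> real^'d^'n"
    and \<mu> L :: "real^'d \<Rightarrow> real" and L_H L_J L_Df L_Dg :: real
    and \<beta>0 \<rho>l \<rho>u lam \<eta> :: real
    and \<theta> z :: "nat \<Rightarrow> real^'d" and \<epsilon> \<alpha> \<beta> :: "nat \<Rightarrow> real"
    and xt :: "nat \<Rightarrow> real^'n"
  \<comment> \<open>(A1)\<close>
  assumes A1_grad: "\<And>x \<theta>'. ((\<lambda>y. h y \<theta>') has_derivative (\<lambda>v. Dxh x \<theta>' \<bullet> v)) (at x)"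
    and A1_hess: "\<And>x \<theta>'. ((\<lambda>y. Dxh y \<theta>') has_derivative (\<lambda>v. Hxx x \<theta>' *v v)) (at x)"
    and A1_mu: "\<And>\<theta>'. 0 < \<mu> \<theta>' \<and> \<mu> \<theta>' \<le> L \<theta>'"
    and A1_bounds: "\<And>x \<theta>' v. \<mu> \<theta>' * (v \<bullet> v) \<le> v \<bullet> (Hxx x \<theta>' *v v)
                                 \<and> v \<bullet> (Hxx x \<theta>' *v v) \<le> L \<theta>' * (v \<bullet> v)"
    and A1_cont_grad: "\<And>x. continuous_on UNIV (\<lambda>\<theta>'. Dxh x \<theta>')"
    and A1_cont_hess: "\<And>x. continuous_on UNIV (\<lambda>\<theta>'. Hxx x \<theta>')"
  \<comment> \<open>(A2)\<close>
    and A2_cross: "\<And>x \<theta>'. ((\<lambda>t. Dxh x t) has_derivative (\<lambda>v. Jxt x \<theta>' *v v)) (at \<theta>')"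
    and A2_LH: "\<And>x y \<theta>'. onorm (\<lambda>v. (Hxx x \<theta>' - Hxx y \<theta>') *v v) \<le> L_H * norm (x - y)"
    and A2_LJ: "\<And>x y \<theta>'. onorm (\<lambda>v. (Jxt x \<theta>' - Jxt y \<theta>') *v v) \<le> L_J * norm (x - y)"
  \<comment> \<open>(B)\<close>
    and B_f: "\<And>t. ((\<lambda>t'. g (xhat h t')) has_derivative (\<lambda>v. Df t \<bullet> v)) (at t)"
    and B_fcont: "continuous_on UNIV Df"
    and B_fLip: "\<And>s t. norm (Df s - Df t) \<le> L_Df * norm (s - t)"
    and B_g: "\<And>x. (g has_derivative (\<lambda>v. Dg x \<bullet> v)) (at x)"
    and B_gcont: "continuous_on UNIV Dg"
    and B_gLip: "\<And>x y. norm (Dg x - Dg y) \<le> L_Dg * norm (x - y)"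
    and B_pos: "L_Df > 0" "L_Dg > 0"
    and B_bdd: "bdd_below (range g)"
  \<comment> \<open>parameters\<close>
    and beta0: "\<beta>0 > 0" "\<beta> 0 = \<beta>0"
    and rho: "0 < \<rho>l" "\<rho>l < 1" "1 < \<rho>u"
    and lam_eta: "0 < lam" "lam < \<eta>" "\<eta> < 1"
  \<comment> \<open>sequences\<close>
    and z_nz: "\<And>k. z k \<noteq> 0"
    and eps_nn: "\<And>k. \<epsilon> k \<ge> 0"
    and xt_err: "\<And>k. norm (xt k - xhat h (\<theta> k)) \<le> \<epsilon> k"
    and alpha_pos: "\<And>k. \<alpha> k > 0"
    and beta_pos: "\<And>k. \<beta> k > 0"
    and theta_upd: "\<And>k. \<theta> (Suc k) = \<theta> k - \<alpha> k *\<^sub>R z k"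
    and z_err: "\<And>k. norm (z k - Df (\<theta> k)) \<le> (1 - \<eta>) * norm (z k)"
    and disc_real: "\<And>k. 0 \<le> (\<eta> - lam)\<^sup>2 - 4 * L_Df *
          ((norm (Dg (xt k)) + norm (Dg (xt (Suc k)))) * max (\<epsilon> k) (\<epsilon> (Suc k))
           + L_Dg * (max (\<epsilon> k) (\<epsilon> (Suc k)))\<^sup>2) / (norm (z k))\<^sup>2"
    and step: "\<And>k. let w = norm (Dg (xt k)) + norm (Dg (xt (Suc k)));
                      ebar = max (\<epsilon> k) (\<epsilon> (Suc k));
                      s = sqrt ((\<eta> - lam)\<^sup>2 - 4 * L_Df * (w * ebar + L_Dg * ebar\<^sup>2) / (norm (z k))\<^sup>2);
                      al = (\<eta> - lam - s) / L_Df;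
                      au = (\<eta> - lam + s) / L_Df
                  in \<exists>i::nat. \<alpha> k = \<rho>l ^ i * \<beta> k
                       \<and> \<rho>l ^ i * \<beta> k \<in> {al..au}
                       \<and> (\<forall>j<i. \<rho>l ^ j * \<beta> k \<notin> {al..au})
                       \<and> (i > 0 \<longrightarrow> \<alpha> k > \<rho>l * au)"
    and beta_upd: "\<And>k. \<beta> (Suc k) = \<rho>u * \<alpha> k"
  shows "(\<lambda>k. norm (z k)) \<longlonglongrightarrow> 0"
proof -
  define f where "f = (\<lambda>t. g (xhat h t))"
  define m where "m = min \<beta>0 (\<rho>l * ((\<eta> - lam) / L_Df))"
  have step_bounds: "\<alpha> k \<le> 2 * (\<eta> - lam) / L_Df"
    "\<alpha> k = \<beta> k \<or> \<rho>l * ((\<eta> - lam) / L_Df) < \<alpha> k" for k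
  proof -
    have "0 \<le> 4 * L_Df * ((norm (Dg (xt k)) + norm (Dg (xt (Suc k)))) * max (\<epsilon> k) (\<epsilon> (Suc k))
        + L_Dg * (max (\<epsilon> k) (\<epsilon> (Suc k)))\<^sup>2) / (norm (z k))\<^sup>2"
      using eps_nn[of k] B_pos by (simp add: max.coboundedI1)
    from backtracking_step_bounds[OF B_pos(1) _ _ this disc_real[of k] step[of k, unfolded Let_def]]
    show "\<alpha> k \<le> 2 * (\<eta> - lam) / L_Df" "\<alpha> k = \<beta> k \<or> \<rho>l * ((\<eta> - lam) / L_Df) < \<alpha> k"
      using rho lam_eta by auto
  qed
  have "0 < m" unfolding m_def using beta0 rho lam_eta B_pos by simp
  have "m \<le> \<alpha> k" for k
    unfolding m_def beta0(2)[symmetric]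
    using step_sizes_bounded_below[of \<alpha> \<rho>u \<beta>, OF alpha_pos _ beta_upd step_bounds(2)] rho
    by simp
  then have decrease: "f (\<theta> (Suc k)) \<le> f (\<theta> k) - lam * m * (norm (z k))\<^sup>2" for k
  proof -
    have "f (\<theta> (Suc k)) \<le> f (\<theta> k) - lam * \<alpha> k * (norm (z k))\<^sup>2"
      unfolding theta_upd
      by (rule sufficient_decrease[OF B_f[folded f_def] B_fLip B_pos(1) alpha_pos step_bounds(1)
            inner_ge_of_relative_error[OF z_err]])
    moreover have "lam * m * (norm (z k))\<^sup>2 \<le> lam * \<alpha> k * (norm (z k))\<^sup>2"
      using \<open>m \<le> \<alpha> k\<close> lam_eta by (simp add: mult_left_mono mult_right_mono)
    ultimately show ?thesis by linarith
  qed
  obtain B where "\<And>x. B \<le> g x" using B_bdd unfolding bdd_below_def by auto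
  then have "summable (\<lambda>k. lam * m * (norm (z k))\<^sup>2)"
    using decrease \<open>0 < m\<close> lam_eta
    by (intro summable_of_decrease_bounded_below[where F = "f \<circ> \<theta>" and B = B]) (auto simp: f_def)
  then have "(\<lambda>k. (norm (z k))\<^sup>2) \<longlonglongrightarrow> 0"
    using \<open>0 < m\<close> lam_eta by (auto dest: summable_LIMSEQ_zero simp: summable_cmult_iff)
  then show ?thesis
    using tendsto_real_sqrt by fastforce
qed

end
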